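(* Let $\Gamma((r^S)_{S\subseteq I})$ be a quitting game satisfying $r^i_i=0$ for all $i\in I$, with $I_*=[n]\neq\emptyset$. If the problem $\mathrm{LCP}((\hat r^i)_{i=1}^n,\vec 0)$ has a solution $(w,z)$ with $z_0<1$, then for every $\varepsilon>0$ the game has a stationary $\varepsilon$-equilibrium.
   Context: A quitting game $\Gamma((r^S)_{S\subseteq I})$: finite player set $I=[N]$, vectors $r^S\in[-1,1]^N$ for all $S\subseteq I$; at each stage $t\in\mathbb N$ each player chooses to continue or quit; with $t^*$ the first stage at which some player quits and $S^*$ the set of players quitting then ($S^*=\emptyset$ if nobody ever quits), the payoff is $r^{S^*}$. Write $r^i:=r^{\{i\}}$. Strategies are sequences $x_i=(x_i^t)_t\subset[0,1]$ of conditional quitting probabilities; stationary if constant in $t$. $\gamma(x):=\mathbb E_x[r^{S^*}]$; $x$ is an $\varepsilon$-equilibrium if $\gamma_i(x)\ge\gamma_i(x_i',x_{-i})-\varepsilon$ for all $i,x_i'$. Normal players: $I_0:=I$, $I_{l+1}:=\{i\in I_l:\ \exists j\in I_l,\ j\neq i,\ r^j_i\le0\}$, $I_*:=\bigcap_l I_l$; $n:=|I_*|$, and players are renamed so that $I_*=[n]$. For $i\in[n]$, $\hat r^i\in\mathbb R^n$ is the restriction of $r^i$ to the coordinates in $I_*$. For vectors $\hat r^1,\dots,\hat r^n,q\in\mathbb R^n$, the problem $\mathrm{LCP}((\hat r^i)_{i=1}^n,q)$ asks for $w\in\mathbb R^n_{\ge0}$ and a probability vector $z=(z_0,z_1,\dots,z_n)\in\Delta(\{0,1,\dots,n\})$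 such that $w=z_0q+\sum_{i=1}^n z_i\hat r^i$ and, for every $i\in[n]$, $z_i=0$ or $w_i=0$. *)

theory Defs
  imports Complex_Main
begin

text \<open>A payoff is given by r :: nat set => nat => real, where r S i is player i's payoff
  when S is the set of players quitting at the first quitting stage (S = {} if nobody quits).
  A strategy of a player is a sequence of conditional quitting probabilities.\<close>

definition strategy :: "(nat \<Rightarrow> real) \<Rightarrow> bool" where
  "strategy y \<longleftrightarrow> (\<forall>t. 0 \<le> y t \<and> y t \<le> 1)"

definition profile :: "nat set \<Rightarrow> (nat \<Rightarrow> nat \<Rightarrow> real) \<Rightarrow> bool" where
  "profile I x \<longleftrightarrow> (\<forall>i\<in>I. strategy (x i))"

definition stationary :: "nat set \<Rightarrow> (nat \<Rightarrow> nat \<Rightarrow> real) \<Rightarrow> bool" where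
  "stationary I x \<longleftrightarrow> (\<forall>i\<in>I. \<forall>t. x i t = x i 0)"

definition cont_prob :: "nat set \<Rightarrow> (nat \<Rightarrow> nat \<Rightarrow> real) \<Rightarrow> nat \<Rightarrow> real" where
  "cont_prob I x T = (\<Prod>s<T. \<Prod>j\<in>I. (1 - x j s))"

definition quit_prob :: "nat set \<Rightarrow> (nat \<Rightarrow> nat \<Rightarrow> real) \<Rightarrow> nat \<Rightarrow> nat set \<Rightarrow> real" where
  "quit_prob I x t S = cont_prob I x t * (\<Prod>j\<in>S. x j t) * (\<Prod>j\<in>I - S. (1 - x j t))"

definition payoff :: "nat set \<Rightarrow> (nat set \<Rightarrow> nat \<Rightarrow> real) \<Rightarrow> (nat \<Rightarrow> nat \<Rightarrow> real) \<Rightarrow> nat \<Rightarrow> real" where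
  "payoff I r x i =
     (\<Sum>t. \<Sum>S\<in>Pow I - {{}}. quit_prob I x t S * r S i) + lim (cont_prob I x) * r {} i"

definition eps_equilibrium ::
  "nat set \<Rightarrow> (nat set \<Rightarrow> nat \<Rightarrow> real) \<Rightarrow> real \<Rightarrow> (nat \<Rightarrow> nat \<Rightarrow> real) \<Rightarrow> bool" where
  "eps_equilibrium I r \<epsilon> x \<longleftrightarrow> profile I x \<and>
     (\<forall>i\<in>I. \<forall>y. strategy y \<longrightarrow> payoff I r x i \<ge> payoff I r (x(i := y)) i - \<epsilon>)"

fun normal_level :: "nat set \<Rightarrow> (nat set \<Rightarrow> nat \<Rightarrow> real) \<Rightarrow> nat \<Rightarrow> nat set" where
  "normal_level I r 0 = I"
| "normal_level I r (Suc l) =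
     {i \<in> normal_level I r l. \<exists>j\<in>normal_level I r l. j \<noteq> i \<and> r {j} i \<le> 0}"

definition normal_players :: "nat set \<Rightarrow> (nat set \<Rightarrow> nat \<Rightarrow> real) \<Rightarrow> nat set" where
  "normal_players I r = (\<Inter>l. normal_level I r l)"

text \<open>LCP((rhat^i)_{i in K}, q) with the index set K (instead of renaming K to [n]):
  w >= 0 on K, (z0, (z_i)_{i in K}) a probability vector,
  w = z0 q + sum_i z_i rhat^i on K, and complementarity z_i = 0 or w_i = 0.
  Here rhat i k is the k-th coordinate of rhat^i.\<close>
definition LCP_solution ::
  "nat set \<Rightarrow> (nat \<Rightarrow> nat \<Rightarrow> real) \<Rightarrow> (nat \<Rightarrow> real) \<Rightarrow> (nat \<Rightarrow> real) \<Rightarrow> real \<Rightarrow> (nat \<Rightarrow> real) \<Rightarrow> bool" where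
  "LCP_solution K rhat q w z0 z \<longleftrightarrow>
     (\<forall>k\<in>K. 0 \<le> w k) \<and> 0 \<le> z0 \<and> (\<forall>i\<in>K. 0 \<le> z i) \<and> z0 + (\<Sum>i\<in>K. z i) = 1 \<and>
     (\<forall>k\<in>K. w k = z0 * q k + (\<Sum>i\<in>K. z i * rhat i k)) \<and>
     (\<forall>i\<in>K. z i = 0 \<or> w i = 0)"

end

theory Submission
  imports Defs "HOL-Analysis.Infinite_Products"
begin

text \<open>Let every player k quit at a constant rate p_k. Facing these, player i's payoff is affine
  in the total probability with which i ever quits, so the stationary rate is an \<epsilon>-best reply as
  soon as neither quitting at once nor never quitting gains more than \<epsilon>. If the others' total
  rate \<sigma> is small, quitting at once is worth O(\<sigma>), and never quitting is worth the first-order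
  payoff \<Sum>_k p_k r^k_i divided by the per-stage exit probability (at least \<sigma>/2), up to O(\<sigma>).
  Rates proportional to an LCP solution make these first-order payoffs nonnegative, and zero
  for the players who quit. If the solution sits on a single normal player, the definition of
  normal players supplies a second one who is added at a much smaller rate.\<close>

definition survival :: "real \<Rightarrow> (nat \<Rightarrow> real) \<Rightarrow> nat \<Rightarrow> real" where
  "survival q y t = (\<Prod>s<t. (1 - y s) * q)"

definition quit_weight :: "real \<Rightarrow> (nat \<Rightarrow> real) \<Rightarrow> real" where
  "quit_weight q y = (\<Sum>t. survival q y t * y t)"

context
  fixes q :: real and y :: "nat \<Rightarrow> real"
  assumes q: "0 \<le> q" "q < 1" and y: "strategy y"
begin

lemma survival_nonneg: "0 \<le> survival q y t"
  using y q unfolding survival_def strategy_def by (intro prod_nonneg) auto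

lemma survival_Suc: "survival q y (Suc t) = survival q y t * ((1 - y t) * q)"
  by (simp add: survival_def)

lemma survival_tendsto_zero: "survival q y \<longlonglongrightarrow> 0"
proof (rule tendsto_sandwich[of "\<lambda>_. 0" _ _ "\<lambda>t. q ^ t"])
  have "survival q y t \<le> (\<Prod>s<t. q)" for t
    unfolding survival_def using y q
    by (intro prod_mono) (auto simp: strategy_def intro: mult_left_le_one_le)
  then show "\<forall>\<^sub>F t in sequentially. survival q y t \<le> q ^ t" by simp
  show "(\<lambda>t. q ^ t) \<longlonglongrightarrow> 0" using q by (intro LIMSEQ_power_zero) auto
qed (auto simp: survival_nonneg)

lemma survival_telescope: "(\<lambda>t. survival q y t - survival q y (Suc t)) sums 1"
  using telescope_sums'[OF survival_tendsto_zero] by (simp add: survival_def)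

lemma survival_quit_le: "survival q y t * y t \<le> survival q y t - survival q y (Suc t)"
proof -
  have "(1 - y t) * q \<le> 1 - y t" using y q by (auto simp: strategy_def mult_left_le)
  then have "y t \<le> 1 - (1 - y t) * q" by simp
  then have "survival q y t * y t \<le> survival q y t * (1 - (1 - y t) * q)"
    by (rule mult_left_mono[OF _ survival_nonneg])
  then show ?thesis by (simp add: survival_Suc algebra_simps)
qed

lemma summable_survival_quit: "summable (\<lambda>t. survival q y t * y t)"
  by (rule summable_comparison_test[OF _ sums_summable[OF survival_telescope]])
     (use survival_quit_le survival_nonneg y in \<open>auto simp: strategy_def\<close>)

lemma quit_weight_nonneg: "0 \<le> quit_weight q y"
  unfolding quit_weight_def using survival_nonneg y
  by (intro suminf_nonneg summable_survival_quit) (auto simp: strategy_def)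

lemma quit_weight_le_one: "quit_weight q y \<le> 1"
proof -
  have "quit_weight q y \<le> (\<Sum>t. survival q y t - survival q y (Suc t))"
    unfolding quit_weight_def using survival_quit_le summable_survival_quit
    by (intro suminf_le sums_summable[OF survival_telescope]) auto
  then show ?thesis using sums_unique[OF survival_telescope] by simp
qed

text \<open>A stage in which the player quits pays A, a stage in which only others quit pays B; the
  total is the quit weight's convex combination of A and the never-quitting value B/(1-q).\<close>
lemma survival_payoff_sums:
  "(\<lambda>t. survival q y t * (y t * A + (1 - y t) * B)) sums
     (quit_weight q y * (A - B / (1 - q)) + B / (1 - q))"
proof -
  define v where "v = B / (1 - q)"
  have B: "B = v * (1 - q)" using q by (simp add: v_def)
  have split: "survival q y t * (y t * A + (1 - y t) * B)
      = survival q y t * y t * (A - v) + v * (survival q y t - survival q y (Suc t))" for t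
    by (simp add: survival_Suc B algebra_simps)
  have "(\<lambda>t. survival q y t * y t * (A - v) + v * (survival q y t - survival q y (Suc t)))
      sums (quit_weight q y * (A - v) + v * 1)"
    unfolding quit_weight_def
    by (intro sums_add sums_mult2 sums_mult survival_telescope summable_sums summable_survival_quit)
  then show ?thesis unfolding split v_def by simp
qed

end

lemma quit_weight_const:
  fixes a q :: real
  assumes "0 \<le> q" "q < 1" "0 \<le> a" "a \<le> 1"
  shows "quit_weight q (\<lambda>_. a) = a / (1 - (1 - a) * q)"
proof -
  have "(1 - a) * q \<le> q" using assms by (intro mult_left_le_one_le) auto
  then have "norm ((1 - a) * q) < 1" using assms by simp
  then have "(\<lambda>t. ((1 - a) * q) ^ t * a) sums (1 / (1 - (1 - a) * q) * a)"
    by (intro sums_mult2 geometric_sums)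
  then show ?thesis by (simp add: quit_weight_def survival_def sums_unique[symmetric])
qed

definition indep_subset_prob :: "nat set \<Rightarrow> (nat \<Rightarrow> real) \<Rightarrow> nat set \<Rightarrow> real" where
  "indep_subset_prob U p T = (\<Prod>k\<in>T. p k) * (\<Prod>k\<in>U - T. 1 - p k)"

lemma sum_singletons: "(\<Sum>k\<in>U. f {k}) = (\<Sum>T\<in>(\<lambda>k. {k}) ` U. f T)"
  by (subst sum.reindex) (auto intro: inj_onI)

context
  fixes U :: "nat set" and p :: "nat \<Rightarrow> real"
  assumes finite_U: "finite U" and prob: "\<And>k. 0 \<le> p k \<and> p k \<le> 1"
begin

lemma indep_subset_prob_nonneg: "0 \<le> indep_subset_prob U p T"
  unfolding indep_subset_prob_def using prob by (intro mult_nonneg_nonneg prod_nonneg) auto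

lemma sum_indep_subset_prob_nonempty:
  "(\<Sum>T\<in>Pow U - {{}}. indep_subset_prob U p T) = 1 - (\<Prod>k\<in>U. 1 - p k)"
proof -
  have "1 = (\<Prod>k\<in>U. p k + (1 - p k))" by simp
  also have "\<dots> = (\<Sum>T\<in>Pow U. indep_subset_prob U p T)"
    unfolding indep_subset_prob_def by (rule prod_add[OF finite_U])
  also have "\<dots> = indep_subset_prob U p {} + (\<Sum>T\<in>Pow U - {{}}. indep_subset_prob U p T)"
    using finite_U by (subst sum.remove[of _ "{}"]) auto
  finally show ?thesis by (simp add: indep_subset_prob_def)
qed

lemma indep_subset_prob_singleton:
  "k \<in> U \<Longrightarrow> indep_subset_prob U p {k} = p k * (\<Prod>l\<in>U - {k}. 1 - p l)"
  by (simp add: indep_subset_prob_def)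

lemma indep_subset_prob_singleton_le: "k \<in> U \<Longrightarrow> indep_subset_prob U p {k} \<le> p k"
  using prob by (auto simp: indep_subset_prob_singleton intro!: mult_left_le prod_le_1)

lemma indep_subset_prob_singleton_ge:
  assumes "k \<in> U"
  shows "p k * (1 - (\<Sum>l\<in>U. p l)) \<le> indep_subset_prob U p {k}"
proof -
  have "1 - (\<Sum>l\<in>U. p l) \<le> 1 - (\<Sum>l\<in>U - {k}. p l)"
    using finite_U prob by (simp add: sum_mono2)
  also have "\<dots> \<le> (\<Prod>l\<in>U - {k}. 1 - p l)"
    using prob by (intro Weierstrass_prod_ineq) auto
  finally show ?thesis
    using prob[of k] by (simp add: indep_subset_prob_singleton[OF assms] mult_left_mono)
qed

lemma one_minus_prod_le_sum: "1 - (\<Prod>k\<in>U. 1 - p k) \<le> (\<Sum>k\<in>U. p k)"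
  using Weierstrass_prod_ineq[of U p] prob by simp

lemma sum_singleton_indep_subset_prob_le:
  "(\<Sum>k\<in>U. indep_subset_prob U p {k}) \<le> 1 - (\<Prod>k\<in>U. 1 - p k)"
proof -
  have "(\<Sum>k\<in>U. indep_subset_prob U p {k}) \<le> (\<Sum>T\<in>Pow U - {{}}. indep_subset_prob U p T)"
    unfolding sum_singletons
    by (rule sum_mono2) (use finite_U indep_subset_prob_nonneg in auto)
  then show ?thesis by (simp add: sum_indep_subset_prob_nonempty)
qed

lemma sum_singleton_indep_subset_prob_ge:
  "(\<Sum>k\<in>U. p k) * (1 - (\<Sum>k\<in>U. p k)) \<le> (\<Sum>k\<in>U. indep_subset_prob U p {k})"
  unfolding sum_distrib_right by (rule sum_mono) (rule indep_subset_prob_singleton_ge)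

lemma one_minus_prod_ge: "(\<Sum>k\<in>U. p k) * (1 - (\<Sum>k\<in>U. p k)) \<le> 1 - (\<Prod>k\<in>U. 1 - p k)"
  using sum_singleton_indep_subset_prob_ge sum_singleton_indep_subset_prob_le by linarith

lemma abs_sum_indep_subset_prob_le:
  assumes "\<And>T. T \<in> A \<Longrightarrow> \<bar>g T\<bar> \<le> 1"
  shows "\<bar>\<Sum>T\<in>A. indep_subset_prob U p T * g T\<bar> \<le> (\<Sum>T\<in>A. indep_subset_prob U p T)"
proof -
  have "\<bar>\<Sum>T\<in>A. indep_subset_prob U p T * g T\<bar> \<le> (\<Sum>T\<in>A. \<bar>indep_subset_prob U p T * g T\<bar>)"
    by (rule sum_abs)
  also have "\<dots> \<le> (\<Sum>T\<in>A. indep_subset_prob U p T)"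
    by (rule sum_mono)
       (use assms indep_subset_prob_nonneg in \<open>auto simp: abs_mult intro: mult_left_le\<close>)
  finally show ?thesis .
qed

text \<open>To second order in the total rate, only single players quit.\<close>
lemma sum_indep_subset_prob_first_order:
  assumes g: "\<And>T. T \<in> Pow U - {{}} \<Longrightarrow> \<bar>g T\<bar> \<le> 1"
  shows "\<bar>(\<Sum>T\<in>Pow U - {{}}. indep_subset_prob U p T * g T) - (\<Sum>k\<in>U. p k * g {k})\<bar>
    \<le> 2 * (\<Sum>k\<in>U. p k)^2"
proof -
  define P where "P = indep_subset_prob U p"
  define \<sigma> where "\<sigma> = (\<Sum>k\<in>U. p k)"
  define Singles where "Singles = (\<lambda>k. {k}) ` U"
  define M where "M = Pow U - {{}} - Singles"
  have sub: "Singles \<subseteq> Pow U - {{}}" "finite (Pow U - {{}})"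
    using finite_U by (auto simp: Singles_def)
  have split: "(\<Sum>T\<in>Pow U - {{}}. f T) = (\<Sum>k\<in>U. f {k}) + (\<Sum>T\<in>M. f T)" for f :: "nat set \<Rightarrow> real"
    unfolding M_def sum_singletons using sub
    by (subst sum.subset_diff[of Singles]) (auto simp: Singles_def)
  have multi: "\<bar>\<Sum>T\<in>M. P T * g T\<bar> \<le> (\<Sum>T\<in>M. P T)"
    unfolding P_def by (rule abs_sum_indep_subset_prob_le) (use g in \<open>auto simp: M_def\<close>)
  have single: "\<bar>\<Sum>k\<in>U. (P {k} - p k) * g {k}\<bar> \<le> (\<Sum>k\<in>U. p k - P {k})"
  proof -
    have "\<bar>\<Sum>k\<in>U. (P {k} - p k) * g {k}\<bar> \<le> (\<Sum>k\<in>U. \<bar>(P {k} - p k) * g {k}\<bar>)"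
      by (rule sum_abs)
    also have "\<dots> \<le> (\<Sum>k\<in>U. p k - P {k})"
      using g indep_subset_prob_singleton_le
      by (intro sum_mono) (auto simp: P_def abs_mult intro!: mult_left_le)
    finally show ?thesis .
  qed
  have "\<bar>(\<Sum>T\<in>Pow U - {{}}. P T * g T) - (\<Sum>k\<in>U. p k * g {k})\<bar>
      \<le> (\<Sum>k\<in>U. p k - P {k}) + (\<Sum>T\<in>M. P T)"
    using split[of "\<lambda>T. P T * g T"] multi single by (simp add: sum_subtractf left_diff_distrib)
  also have "\<dots> = \<sigma> - (\<Sum>k\<in>U. P {k}) + (1 - (\<Prod>k\<in>U. 1 - p k) - (\<Sum>k\<in>U. P {k}))"
    using split[of P] by (simp add: sum_subtractf \<sigma>_def P_def sum_indep_subset_prob_nonempty)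
  also have "\<dots> \<le> 2 * \<sigma>^2"
    using sum_singleton_indep_subset_prob_ge one_minus_prod_le_sum
    by (simp add: P_def \<sigma>_def power2_eq_square algebra_simps)
  finally show ?thesis by (simp add: P_def \<sigma>_def)
qed

end

locale stationary_deviation =
  fixes I :: "nat set" and i :: nat and p :: "nat \<Rightarrow> real" and r :: "nat set \<Rightarrow> nat \<Rightarrow> real"
  assumes finite_players: "finite I" and player: "i \<in> I"
    and prob: "\<And>k. 0 \<le> p k \<and> p k \<le> 1"
begin

definition stay_prob :: real where
  "stay_prob = (\<Prod>k\<in>I - {i}. 1 - p k)"

definition quit_value :: real where
  "quit_value = (\<Sum>T\<in>Pow (I - {i}). indep_subset_prob (I - {i}) p T * r (insert i T) i)"

definition others_quit_value :: real where
  "others_quit_value = (\<Sum>T\<in>Pow (I - {i}) - {{}}. indep_subset_prob (I - {i}) p T * r T i)"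

definition never_quit_value :: real where
  "never_quit_value = others_quit_value / (1 - stay_prob)"

lemma finite_others: "finite (I - {i})"
  using finite_players by simp

lemma stay_prob_nonneg: "0 \<le> stay_prob"
  unfolding stay_prob_def using prob by (intro prod_nonneg) auto

lemma stage_quit_sum:
  fixes f :: "nat set \<Rightarrow> real" and y :: "nat \<Rightarrow> real"
  defines "x \<equiv> (\<lambda>k t. p k)(i := y)"
  shows "(\<Sum>S\<in>Pow I - {{}}. (\<Prod>j\<in>S. x j t) * (\<Prod>j\<in>I - S. 1 - x j t) * f S) =
    y t * (\<Sum>T\<in>Pow (I - {i}). indep_subset_prob (I - {i}) p T * f (insert i T)) +
    (1 - y t) * (\<Sum>T\<in>Pow (I - {i}) - {{}}. indep_subset_prob (I - {i}) p T * f T)"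
proof -
  define U where "U = I - {i}"
  define g where "g S = (\<Prod>j\<in>S. x j t) * (\<Prod>j\<in>I - S. 1 - x j t) * f S" for S
  have I: "I = insert i U" "i \<notin> U" "finite U"
    using player finite_players by (auto simp: U_def)
  have U_prod: "(\<Prod>j\<in>V. h (x j t)) = (\<Prod>j\<in>V. h (p j))" if "V \<subseteq> U" for V and h :: "real \<Rightarrow> real"
    using that I(2) by (intro prod.cong) (auto simp: x_def)
  have with_i: "g (insert i T) = y t * (indep_subset_prob U p T * f (insert i T))"
    if "T \<in> Pow U" for T
  proof -
    have "finite T" "i \<notin> T" "I - insert i T = U - T" using that I by (auto intro: finite_subset)
    then show ?thesis
      using that U_prod[of T "\<lambda>z. z"] U_prod[of "U - T" "\<lambda>z. 1 - z"]
      by (simp add: g_def indep_subset_prob_def x_def)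
  qed
  have without_i: "g T = (1 - y t) * (indep_subset_prob U p T * f T)" if "T \<in> Pow U" for T
  proof -
    have "I - T = insert i (U - T)" "finite (U - T)" "i \<notin> U - T" using that I by auto
    then show ?thesis
      using that U_prod[of T "\<lambda>z. z"] U_prod[of "U - T" "\<lambda>z. 1 - z"]
      by (simp add: g_def indep_subset_prob_def x_def)
  qed
  have split: "Pow I - {{}} = (Pow U - {{}}) \<union> insert i ` Pow U"
    unfolding I(1) Pow_insert by auto
  have "(\<Sum>S\<in>Pow I - {{}}. g S) = (\<Sum>T\<in>Pow U - {{}}. g T) + (\<Sum>S\<in>insert i ` Pow U. g S)"
    unfolding split using I(2,3) by (intro sum.union_disjoint) auto
  also have "(\<Sum>S\<in>insert i ` Pow U. g S) = (\<Sum>T\<in>Pow U. g (insert i T))"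
    using I(2) by (subst sum.reindex) (auto intro!: inj_onI)
  finally show ?thesis
    by (simp add: g_def[symmetric] U_def[symmetric] with_i without_i sum_distrib_left add.commute)
qed

lemma cont_prob_deviation:
  "cont_prob I ((\<lambda>k t. p k)(i := y)) = survival stay_prob y"
proof -
  have "(\<Prod>j\<in>I - {i}. 1 - ((\<lambda>k t. p k)(i := y)) j s) = stay_prob" for s
    unfolding stay_prob_def by (rule prod.cong) auto
  then have "(\<Prod>j\<in>I. 1 - ((\<lambda>k t. p k)(i := y)) j s) = (1 - y s) * stay_prob" for s
    using finite_players player by (simp add: prod.remove)
  then show ?thesis by (simp add: cont_prob_def survival_def fun_eq_iff)
qed

lemma deviation_payoff:
  assumes y: "strategy y" and stay: "stay_prob < 1"
  shows "payoff I r ((\<lambda>k t. p k)(i := y)) i =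
    quit_weight stay_prob y * (quit_value - never_quit_value) + never_quit_value"
proof -
  define x where "x = (\<lambda>k t. p k)(i := y)"
  define C where "C = survival stay_prob y"
  have stage: "(\<Sum>S\<in>Pow I - {{}}. quit_prob I x t S * r S i)
      = C t * (y t * quit_value + (1 - y t) * others_quit_value)" for t
  proof -
    have "(\<Sum>S\<in>Pow I - {{}}. quit_prob I x t S * r S i)
        = C t * (\<Sum>S\<in>Pow I - {{}}. (\<Prod>j\<in>S. x j t) * (\<Prod>j\<in>I - S. 1 - x j t) * r S i)"
      by (simp add: quit_prob_def x_def cont_prob_deviation C_def sum_distrib_left mult.assoc)
    then show ?thesis
      unfolding x_def stage_quit_sum quit_value_def others_quit_value_def .
  qed
  have "lim (cont_prob I x) = 0"
    using survival_tendsto_zero[OF stay_prob_nonneg stay y]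
    by (simp add: x_def cont_prob_deviation limI)
  then have "payoff I r x i = (\<Sum>t. C t * (y t * quit_value + (1 - y t) * others_quit_value))"
    unfolding payoff_def stage by simp
  then show ?thesis
    using survival_payoff_sums[OF stay_prob_nonneg stay y]
    by (simp add: x_def C_def never_quit_value_def sums_unique[symmetric])
qed

definition stationary_weight :: real where
  "stationary_weight = quit_weight stay_prob (\<lambda>_. p i)"

text \<open>Every strategy yields a payoff affine in its quit weight, which ranges over [0,1]; so the
  largest gain over the stationary weight is attained at weight 1 or 0.\<close>
lemma stationary_eps_best_reply:
  assumes stay: "stay_prob < 1"
    and quit_gain: "(1 - stationary_weight) * (quit_value - never_quit_value) \<le> \<epsilon>"
    and wait_gain: "stationary_weight * (never_quit_value - quit_value) \<le> \<epsilon>"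
    and y: "strategy y"
  shows "payoff I r ((\<lambda>k t. p k)(i := y)) i - \<epsilon> \<le> payoff I r (\<lambda>k t. p k) i"
proof -
  define \<beta> where "\<beta> = quit_weight stay_prob y"
  have "\<beta> \<in> {0..1}"
    using quit_weight_nonneg quit_weight_le_one stay_prob_nonneg stay y by (simp add: \<beta>_def)
  moreover have "strategy (\<lambda>_. p i)" using prob by (simp add: strategy_def)
  moreover have const: "(\<lambda>k t. p k)(i := (\<lambda>_. p i)) = (\<lambda>k t. p k)" by auto
  ultimately have payoffs:
      "payoff I r ((\<lambda>k t. p k)(i := y)) i = \<beta> * (quit_value - never_quit_value) + never_quit_value"
      "payoff I r (\<lambda>k t. p k) i = stationary_weight * (quit_value - never_quit_value) + never_quit_value"
    using deviation_payoff[OF y stay] deviation_payoff[of "\<lambda>_. p i", OF _ stay, unfolded const]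
    by (simp_all add: stationary_weight_def \<beta>_def)
  show ?thesis
  proof (cases "never_quit_value \<le> quit_value")
    case True
    then have "\<beta> * (quit_value - never_quit_value) \<le> 1 * (quit_value - never_quit_value)"
      using \<open>\<beta> \<in> {0..1}\<close> by (intro mult_right_mono) auto
    then show ?thesis using payoffs quit_gain by (simp add: algebra_simps)
  next
    case False
    then have "0 * (never_quit_value - quit_value) \<le> \<beta> * (never_quit_value - quit_value)"
      using \<open>\<beta> \<in> {0..1}\<close> by (intro mult_right_mono) auto
    then show ?thesis using payoffs wait_gain by (simp add: algebra_simps)
  qed
qed

definition others_rate :: real where
  "others_rate = (\<Sum>k\<in>I - {i}. p k)"

definition first_order_value :: real where
  "first_order_value = (\<Sum>k\<in>I - {i}. p k * r {k} i)"

lemma stationary_weight_eq: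
  "stay_prob < 1 \<Longrightarrow> stationary_weight = p i / (1 - (1 - p i) * stay_prob)"
  unfolding stationary_weight_def using stay_prob_nonneg prob by (intro quit_weight_const) auto

lemma one_minus_stay_prob_le_others_rate: "1 - stay_prob \<le> others_rate"
  unfolding stay_prob_def others_rate_def using finite_others prob by (rule one_minus_prod_le_sum)

lemma others_rate_le_one_minus_stay_prob: "others_rate * (1 - others_rate) \<le> 1 - stay_prob"
  unfolding stay_prob_def others_rate_def using finite_others prob by (rule one_minus_prod_ge)

end

lemma mult_le_mult_bound:
  fixes a b x c :: real
  assumes "0 \<le> a" "a \<le> b" "x \<le> c" "0 \<le> c"
  shows "a * x \<le> b * c"
proof (cases "0 \<le> x")
  case True
  then show ?thesis using assms by (intro mult_mono) auto
next
  case False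
  then have "a * x \<le> 0" using assms by (simp add: mult_nonneg_nonpos)
  also have "0 \<le> b * c" using assms by simp
  finally show ?thesis .
qed

locale bounded_stationary_deviation = stationary_deviation +
  assumes bounded: "\<And>S. S \<subseteq> I \<Longrightarrow> \<bar>r S i\<bar> \<le> 1"
    and own_quit_zero: "r {i} i = 0"
begin

lemma abs_quit_value_le: "\<bar>quit_value\<bar> \<le> 1 - stay_prob"
proof -
  have "quit_value
      = (\<Sum>T\<in>Pow (I - {i}) - {{}}. indep_subset_prob (I - {i}) p T * r (insert i T) i)"
    unfolding quit_value_def using finite_others own_quit_zero
    by (subst sum.remove[of _ "{}"]) auto
  also have "\<bar>\<dots>\<bar> \<le> (\<Sum>T\<in>Pow (I - {i}) - {{}}. indep_subset_prob (I - {i}) p T)"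
    using finite_others prob player
    by (intro abs_sum_indep_subset_prob_le bounded) auto
  finally show ?thesis
    using sum_indep_subset_prob_nonempty[OF finite_others prob] by (simp add: stay_prob_def)
qed

lemma abs_others_quit_value_le: "\<bar>others_quit_value\<bar> \<le> 1 - stay_prob"
proof -
  have "\<bar>others_quit_value\<bar> \<le> (\<Sum>T\<in>Pow (I - {i}) - {{}}. indep_subset_prob (I - {i}) p T)"
    unfolding others_quit_value_def using finite_others prob
    by (intro abs_sum_indep_subset_prob_le bounded) auto
  then show ?thesis
    using sum_indep_subset_prob_nonempty[OF finite_others prob] by (simp add: stay_prob_def)
qed

lemma others_quit_value_first_order:
  "\<bar>others_quit_value - first_order_value\<bar> \<le> 2 * others_rate^2"
  unfolding others_quit_value_def first_order_value_def others_rate_def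
  using bounded by (intro sum_indep_subset_prob_first_order[OF finite_others prob]) auto

context
  assumes rate_pos: "0 < others_rate" and rate_le: "others_rate \<le> 1/2"
begin

lemma half_rate_le_one_minus_stay_prob: "others_rate / 2 \<le> 1 - stay_prob"
proof -
  have "others_rate * others_rate \<le> others_rate * (1/2)"
    using rate_pos rate_le by (intro mult_left_mono) auto
  then show ?thesis using others_rate_le_one_minus_stay_prob by (simp add: algebra_simps)
qed

lemma stay_prob_less_one: "stay_prob < 1"
  using half_rate_le_one_minus_stay_prob rate_pos by linarith

lemma never_quit_value_ge:
  assumes "- c \<le> first_order_value" "0 \<le> c"
  shows "- (2 * c / others_rate + 4 * others_rate) \<le> never_quit_value"
proof -
  define K where "K = c + 2 * others_rate^2"
  have "K / (1 - stay_prob) \<le> K / (others_rate / 2)"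
    using half_rate_le_one_minus_stay_prob rate_pos assms
    by (intro divide_left_mono) (auto simp: K_def)
  also have "\<dots> = 2 * c / others_rate + 4 * others_rate"
    using rate_pos by (simp add: K_def power2_eq_square field_simps)
  finally have "K / (1 - stay_prob) \<le> 2 * c / others_rate + 4 * others_rate" .
  moreover have "- K / (1 - stay_prob) \<le> others_quit_value / (1 - stay_prob)"
    using others_quit_value_first_order assms stay_prob_less_one
    by (intro divide_right_mono) (auto simp: K_def abs_le_iff)
  ultimately show ?thesis unfolding never_quit_value_def by simp
qed

lemma never_quit_value_le:
  assumes "first_order_value \<le> c" "0 \<le> c"
  shows "never_quit_value \<le> 2 * c / others_rate + 4 * others_rate"
proof -
  define K where "K = c + 2 * others_rate^2"
  have "others_quit_value / (1 - stay_prob) \<le> K / (1 - stay_prob)"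
    using others_quit_value_first_order assms stay_prob_less_one
    by (intro divide_right_mono) (auto simp: K_def abs_le_iff)
  also have "K / (1 - stay_prob) \<le> K / (others_rate / 2)"
    using half_rate_le_one_minus_stay_prob rate_pos assms
    by (intro divide_left_mono) (auto simp: K_def)
  also have "\<dots> = 2 * c / others_rate + 4 * others_rate"
    using rate_pos by (simp add: K_def power2_eq_square field_simps)
  finally show ?thesis by (simp add: never_quit_value_def)
qed

lemma abs_never_quit_value_le: "\<bar>never_quit_value\<bar> \<le> 1"
  using abs_others_quit_value_le stay_prob_less_one
  by (simp add: never_quit_value_def abs_divide divide_le_eq_1)

lemma abs_quit_value_le_rate: "\<bar>quit_value\<bar> \<le> others_rate"
  using abs_quit_value_le one_minus_stay_prob_le_others_rate by linarith

lemma quit_minus_never_quit_le_two: "\<bar>quit_value - never_quit_value\<bar> \<le> 2"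
  using abs_quit_value_le_rate abs_never_quit_value_le rate_le by linarith

lemma stationary_weight_bounds: "0 \<le> stationary_weight" "stationary_weight \<le> 1"
  unfolding stationary_weight_def
  using quit_weight_nonneg quit_weight_le_one stay_prob_nonneg stay_prob_less_one prob
  by (auto simp: strategy_def)

lemma stationary_weight_le: "stationary_weight \<le> 2 * p i / others_rate"
proof -
  have "(1 - p i) * stay_prob \<le> stay_prob"
    using prob stay_prob_nonneg by (intro mult_left_le_one_le) auto
  then have "p i / (1 - (1 - p i) * stay_prob) \<le> p i / (1 - stay_prob)"
    using prob stay_prob_less_one by (intro divide_left_mono) auto
  also have "\<dots> \<le> p i / (others_rate / 2)"
    using prob half_rate_le_one_minus_stay_prob rate_pos by (intro divide_left_mono) auto
  also have "\<dots> = 2 * p i / others_rate" by simp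
  finally show ?thesis by (simp add: stationary_weight_eq[OF stay_prob_less_one])
qed

lemma one_minus_stationary_weight_le:
  assumes "0 < p i"
  shows "1 - stationary_weight \<le> others_rate / p i"
proof -
  have "(1 - p i) * stay_prob \<le> 1 - p i"
    using prob[of i] stay_prob_nonneg stay_prob_less_one by (intro mult_left_le) auto
  then have den: "p i \<le> 1 - (1 - p i) * stay_prob" "0 < 1 - (1 - p i) * stay_prob"
    using assms by auto
  have "1 - stationary_weight = (1 - p i) * (1 - stay_prob) / (1 - (1 - p i) * stay_prob)"
    using den by (simp add: stationary_weight_eq[OF stay_prob_less_one] field_simps)
  also have "\<dots> \<le> (1 - p i) * (1 - stay_prob) / p i"
    using den assms prob[of i] stay_prob_less_one by (intro divide_left_mono) auto
  also have "\<dots> \<le> others_rate / p i"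
  proof -
    have "(1 - p i) * (1 - stay_prob) \<le> 1 - stay_prob"
      using assms prob[of i] stay_prob_less_one by (intro mult_left_le_one_le) auto
    then show ?thesis
      using assms one_minus_stay_prob_le_others_rate by (intro divide_right_mono) auto
  qed
  finally show ?thesis .
qed

lemma quit_gain_le_of_value:
  assumes "- c \<le> first_order_value" "0 \<le> c"
    and "5 * others_rate + 2 * c / others_rate \<le> \<epsilon>"
  shows "(1 - stationary_weight) * (quit_value - never_quit_value) \<le> \<epsilon>"
proof -
  have "0 \<le> 2 * c / others_rate" using assms(2) rate_pos by simp
  then show ?thesis
    using mult_le_mult_bound[of "1 - stationary_weight" 1 "quit_value - never_quit_value" \<epsilon>]
      never_quit_value_ge[OF assms(1,2)] abs_quit_value_le_rate stationary_weight_bounds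
      assms(3) rate_pos
    by (auto simp: abs_le_iff)
qed

lemma quit_gain_le_of_rate:
  assumes "0 < p i" "2 * others_rate / p i \<le> \<epsilon>"
  shows "(1 - stationary_weight) * (quit_value - never_quit_value) \<le> \<epsilon>"
proof -
  have "(1 - stationary_weight) * (quit_value - never_quit_value) \<le> others_rate / p i * 2"
    using one_minus_stationary_weight_le[OF assms(1)] quit_minus_never_quit_le_two
      stationary_weight_bounds
    by (intro mult_le_mult_bound) (auto simp: abs_le_iff)
  also have "\<dots> = 2 * others_rate / p i" by simp
  finally show ?thesis using assms(2) by simp
qed

lemma wait_gain_le_of_value:
  assumes "first_order_value \<le> c" "0 \<le> c"
    and "5 * others_rate + 2 * c / others_rate \<le> \<epsilon>"
  shows "stationary_weight * (never_quit_value - quit_value) \<le> \<epsilon>"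
proof -
  have "0 \<le> 2 * c / others_rate" using assms(2) rate_pos by simp
  then show ?thesis
    using mult_le_mult_bound[of stationary_weight 1 "never_quit_value - quit_value" \<epsilon>]
      never_quit_value_le[OF assms(1,2)] abs_quit_value_le_rate stationary_weight_bounds
      assms(3) rate_pos
    by (auto simp: abs_le_iff)
qed

lemma wait_gain_le_of_rate:
  assumes "4 * p i / others_rate \<le> \<epsilon>"
  shows "stationary_weight * (never_quit_value - quit_value) \<le> \<epsilon>"
proof -
  have "stationary_weight * (never_quit_value - quit_value) \<le> 2 * p i / others_rate * 2"
    using stationary_weight_le quit_minus_never_quit_le_two stationary_weight_bounds
    by (intro mult_le_mult_bound) (auto simp: abs_le_iff)
  then show ?thesis using assms by simp
qed

lemma small_rate_eps_best_reply:
  assumes "(1 - stationary_weight) * (quit_value - never_quit_value) \<le> \<epsilon>"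
    and "stationary_weight * (never_quit_value - quit_value) \<le> \<epsilon>"
    and "strategy y"
  shows "payoff I r ((\<lambda>k t. p k)(i := y)) i - \<epsilon> \<le> payoff I r (\<lambda>k t. p k) i"
  using assms by (rule stationary_eps_best_reply[OF stay_prob_less_one])

end

end

lemma normal_level_antimono: "m \<le> l \<Longrightarrow> normal_level I r l \<subseteq> normal_level I r m"
  by (rule lift_Suc_antimono_le[of "normal_level I r"]) auto

lemma normal_players_subset: "normal_players I r \<subseteq> I"
  unfolding normal_players_def by (metis INT_lower UNIV_I normal_level.simps(1))

lemma normal_players_subset_level: "normal_players I r \<subseteq> normal_level I r l"
  unfolding normal_players_def by blast

lemma non_normal_quit_payoff_pos:
  assumes "i \<in> I" "i \<notin> normal_players I r" "k \<in> normal_players I r"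
  shows "0 < r {k} i"
proof -
  have "\<exists>l. i \<notin> normal_level I r l" using assms(2) unfolding normal_players_def by blast
  then obtain l where "i \<in> normal_level I r l" "i \<notin> normal_level I r (Suc l)"
    using exists_least_lemma[of "\<lambda>l. i \<notin> normal_level I r l"] assms(1) by auto
  moreover have "k \<in> normal_level I r l" "k \<noteq> i"
    using assms normal_players_subset_level by auto
  ultimately show ?thesis by force
qed

lemma normal_level_fixpoint:
  assumes "finite I"
  obtains l where "normal_level I r (Suc l) = normal_level I r l"
proof -
  obtain l where l: "\<forall>m. card (normal_level I r l) \<le> card (normal_level I r m)"
    using ex_has_least_nat[of "\<lambda>_. True" 0 "\<lambda>l. card (normal_level I r l)"] by blast
  have "finite (normal_level I r l)"
    using assms normal_level_antimono[of 0 l I r] by (auto intro: finite_subset)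
  moreover have "normal_level I r (Suc l) \<subseteq> normal_level I r l" by auto
  ultimately have "normal_level I r (Suc l) = normal_level I r l"
    using l card_mono by (metis card_subset_eq le_antisym)
  then show thesis by (rule that)
qed

lemma normal_players_eq_fixpoint_level:
  assumes stable: "normal_level I r (Suc l) = normal_level I r l"
  shows "normal_players I r = normal_level I r l"
proof
  have const: "normal_level I r (l + d) = normal_level I r l" for d
    by (induction d) (use stable in auto)
  have "normal_level I r l \<subseteq> normal_level I r m" for m
    using const[of m] normal_level_antimono[of m "l + m" I r] by simp
  then show "normal_level I r l \<subseteq> normal_players I r"
    unfolding normal_players_def by blast
qed (rule normal_players_subset_level)

lemma normal_player_has_nonpos_quitter:
  assumes "finite I" "i \<in> normal_players I r"
  shows "\<exists>j\<in>normal_players I r. j \<noteq> i \<and> r {j} i \<le> 0"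
proof -
  obtain l where stable: "normal_level I r (Suc l) = normal_level I r l"
    using normal_level_fixpoint[OF assms(1)] by blast
  then show ?thesis
    using assms(2) normal_players_eq_fixpoint_level[OF stable] by auto
qed

lemma stationary_eps_equilibriumI:
  assumes "\<And>k. 0 \<le> p k \<and> p k \<le> 1"
    and "\<And>i y. i \<in> I \<Longrightarrow> strategy y \<Longrightarrow>
      payoff I r ((\<lambda>k t. p k)(i := y)) i - \<epsilon> \<le> payoff I r (\<lambda>k t. p k) i"
  shows "stationary I (\<lambda>k t. p k) \<and> eps_equilibrium I r \<epsilon> (\<lambda>k t. p k)"
  using assms by (auto simp: stationary_def eps_equilibrium_def profile_def strategy_def)

lemma lcp_quit_payoff_nonneg:
  assumes lcp: "LCP_solution (normal_players I r) (\<lambda>i k. r {i} k) (\<lambda>_. 0) w z0 z"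
    and i: "i \<in> I"
  shows "0 \<le> (\<Sum>k\<in>normal_players I r. z k * r {k} i)"
proof (cases "i \<in> normal_players I r")
  case True
  then show ?thesis using lcp by (auto simp: LCP_solution_def)
next
  case False
  then show ?thesis
    using lcp non_normal_quit_payoff_pos[OF i False]
    by (auto simp: LCP_solution_def less_imp_le intro!: sum_nonneg)
qed

lemma lcp_quit_payoff_zero:
  assumes "LCP_solution (normal_players I r) (\<lambda>i k. r {i} k) (\<lambda>_. 0) w z0 z"
    and "i \<in> normal_players I r" "0 < z i"
  shows "(\<Sum>k\<in>normal_players I r. z k * r {k} i) = 0"
  using assms by (auto simp: LCP_solution_def)

definition proportional_rates :: "nat set \<Rightarrow> real \<Rightarrow> (nat \<Rightarrow> real) \<Rightarrow> nat \<Rightarrow> real" where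
  "proportional_rates K \<delta> z k = (if k \<in> K then \<delta> * z k else 0)"

definition two_rates :: "nat \<Rightarrow> nat \<Rightarrow> real \<Rightarrow> nat \<Rightarrow> real" where
  "two_rates i0 j \<delta> k = (if k = i0 then \<delta> else if k = j then \<delta>^2 else 0)"

lemma proportional_rates_prob:
  assumes "finite K" "\<And>k. k \<in> K \<Longrightarrow> 0 \<le> z k" "sum z K \<le> 1" "0 \<le> \<delta>" "\<delta> \<le> 1"
  shows "0 \<le> proportional_rates K \<delta> z k \<and> proportional_rates K \<delta> z k \<le> 1"
proof (cases "k \<in> K")
  case True
  then have "z k \<le> 1" using member_le_sum[of k K z] assms by auto
  then show ?thesis using True assms mult_mono[of \<delta> 1 "z k" 1] by (simp add: proportional_rates_def)
qed (simp add: proportional_rates_def)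

lemma two_rates_prob:
  "0 \<le> \<delta> \<Longrightarrow> \<delta> \<le> 1 \<Longrightarrow> 0 \<le> two_rates i0 j \<delta> k \<and> two_rates i0 j \<delta> k \<le> 1"
  by (auto simp: two_rates_def power_le_one)

context
  fixes I :: "nat set" and r :: "nat set \<Rightarrow> nat \<Rightarrow> real"
  assumes finite_players: "finite I"
    and bounded: "\<And>S i. S \<subseteq> I \<Longrightarrow> i \<in> I \<Longrightarrow> \<bar>r S i\<bar> \<le> 1"
    and own_quit_zero: "\<And>i. i \<in> I \<Longrightarrow> r {i} i = 0"
begin

lemma bounded_stationary_deviationI:
  "i \<in> I \<Longrightarrow> (\<And>k. 0 \<le> p k \<and> p k \<le> 1) \<Longrightarrow> bounded_stationary_deviation I i p r"
  using finite_players bounded own_quit_zero by unfold_locales auto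

text \<open>With rates \<delta> z_k, every player's first-order payoff is \<delta> times its slack \<Sum>_k z_k r^k_i.
  Two weighted players make the others' rate positive for everybody.\<close>
lemma proportional_rates_eps_best_reply:
  assumes K: "K \<subseteq> I" and z: "\<And>k. k \<in> K \<Longrightarrow> 0 \<le> z k" "sum z K \<le> 1"
    and two: "a \<in> K" "b \<in> K" "a \<noteq> b" "0 < z a" "0 < z b"
    and slack: "\<And>i. i \<in> I \<Longrightarrow> 0 \<le> (\<Sum>k\<in>K. z k * r {k} i)"
    and tight: "\<And>i. i \<in> K \<Longrightarrow> 0 < z i \<Longrightarrow> (\<Sum>k\<in>K. z k * r {k} i) = 0"
    and \<delta>: "0 < \<delta>" "\<delta> \<le> 1/2" "5 * \<delta> \<le> \<epsilon>"
    and i: "i \<in> I" and y: "strategy y"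
  defines "p \<equiv> proportional_rates K \<delta> z"
  shows "payoff I r ((\<lambda>k t. p k)(i := y)) i - \<epsilon> \<le> payoff I r (\<lambda>k t. p k) i"
proof -
  have "finite K" using K finite_players by (rule finite_subset)
  then have "0 \<le> p k \<and> p k \<le> 1" for k
    unfolding p_def using z \<delta> by (intro proportional_rates_prob) auto
  then interpret bounded_stationary_deviation I i p r by (rule bounded_stationary_deviationI[OF i])
  have sum_others: "(\<Sum>k\<in>I - {i}. p k * f k) = \<delta> * (\<Sum>k\<in>K - {i}. z k * f k)" for f
  proof -
    have "(\<Sum>k\<in>I - {i}. p k * f k) = (\<Sum>k\<in>I - {i}. if k \<in> K then \<delta> * z k * f k else 0)"
      by (rule sum.cong) (auto simp: p_def proportional_rates_def)
    also have "\<dots> = (\<Sum>k\<in>(I - {i}) \<inter> K. \<delta> * z k * f k)"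
      using finite_players by (simp add: sum.inter_restrict)
    also have "(I - {i}) \<inter> K = K - {i}" using K by auto
    finally show ?thesis by (simp add: sum_distrib_left mult.assoc)
  qed
  have L: "first_order_value = \<delta> * (\<Sum>k\<in>K. z k * r {k} i)"
    unfolding first_order_value_def sum_others using \<open>finite K\<close> own_quit_zero
    by (simp add: sum_diff1)
  obtain c where c: "c \<in> K" "c \<noteq> i" "0 < z c" using two by metis
  have "z c \<le> (\<Sum>k\<in>K - {i}. z k)" using c \<open>finite K\<close> z by (intro member_le_sum) auto
  moreover have "(\<Sum>k\<in>K - {i}. z k) \<le> sum z K" using z \<open>finite K\<close> by (intro sum_mono2) auto
  ultimately have rate: "0 < others_rate" "others_rate \<le> \<delta>"
    unfolding others_rate_def using sum_others[where f = "\<lambda>_. 1"] c \<delta> z(2)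
    by (auto intro: mult_left_le)
  note gains = quit_gain_le_of_value[where c = 0] wait_gain_le_of_value[where c = 0]
    wait_gain_le_of_rate
  show ?thesis
  proof (cases "i \<in> K \<and> 0 < z i")
    case True
    then show ?thesis
      using rate \<delta> L tight by (intro small_rate_eps_best_reply gains y) auto
  next
    case False
    then have "p i = 0" using z by (force simp: p_def proportional_rates_def)
    then show ?thesis
      using rate \<delta> L slack[OF i] by (intro small_rate_eps_best_reply gains y) auto
  qed
qed

text \<open>The rates \<delta> of i0 and \<delta>^2 of j are so unequal that i0's stationary quit weight is close to
  1 and j's close to 0.\<close>
lemma two_rates_eps_best_reply:
  assumes i0j: "i0 \<in> I" "j \<in> I" "i0 \<noteq> j"
    and harmless: "\<And>k. k \<in> I \<Longrightarrow> 0 \<le> r {i0} k" and j_harmless: "r {j} i0 \<le> 0"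
    and \<delta>: "0 < \<delta>" "\<delta> \<le> 1/4" "12 * \<delta> \<le> \<epsilon>"
    and i: "i \<in> I" and y: "strategy y"
  defines "p \<equiv> two_rates i0 j \<delta>"
  shows "payoff I r ((\<lambda>k t. p k)(i := y)) i - \<epsilon> \<le> payoff I r (\<lambda>k t. p k) i"
proof -
  have \<delta>2: "\<delta>^2 \<le> \<delta> / 4" using \<delta> by (auto simp: power2_eq_square)
  have "0 \<le> p k \<and> p k \<le> 1" for k using \<delta> unfolding p_def by (intro two_rates_prob) auto
  then interpret bounded_stationary_deviation I i p r by (rule bounded_stationary_deviationI[OF i])
  have sum_others: "(\<Sum>k\<in>I - {i}. p k * f k)
      = (if i = i0 then 0 else \<delta> * f i0) + (if i = j then 0 else \<delta>^2 * f j)" for f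
  proof -
    have "p k * f k = (if k = i0 then \<delta> * f i0 else 0) + (if k = j then \<delta>^2 * f j else 0)" for k
      using i0j by (simp add: p_def two_rates_def)
    then show ?thesis using finite_players i0j by (simp add: sum.distrib sum.delta)
  qed
  have rate: "others_rate = (if i = i0 then 0 else \<delta>) + (if i = j then 0 else \<delta>^2)"
    using sum_others[where f = "\<lambda>_. 1"] by (simp add: others_rate_def)
  have L: "first_order_value
      = (if i = i0 then 0 else \<delta> * r {i0} i) + (if i = j then 0 else \<delta>^2 * r {j} i)"
    using sum_others[where f = "\<lambda>k. r {k} i"] by (simp add: first_order_value_def)
  consider "i = i0" | "i = j" | "i \<noteq> i0" "i \<noteq> j" by blast
  then show ?thesis
  proof cases
    case 1
    then have "others_rate = \<delta>^2" and "first_order_value \<le> 0" and "p i = \<delta>"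
      using rate L i0j j_harmless \<delta> by (auto simp: p_def two_rates_def mult_nonneg_nonpos)
    moreover have "2 * \<delta>^2 / \<delta> = 2 * \<delta>" by (simp add: power2_eq_square)
    ultimately show ?thesis
      using \<delta> \<delta>2
      by (intro small_rate_eps_best_reply quit_gain_le_of_rate wait_gain_le_of_value[where c = 0] y)
         auto
  next
    case 2
    then have "others_rate = \<delta>" and "0 \<le> first_order_value" and "p i = \<delta>^2"
      using rate L i0j harmless[OF i] \<delta> by (auto simp: p_def two_rates_def)
    moreover have "4 * \<delta>^2 / \<delta> = 4 * \<delta>" by (simp add: power2_eq_square)
    ultimately show ?thesis
      using \<delta> \<delta>2
      by (intro small_rate_eps_best_reply quit_gain_le_of_value[where c = 0] wait_gain_le_of_rate y)
         auto
  next
    case 3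
    then have \<sigma>: "others_rate = \<delta> + \<delta>^2" and "p i = 0"
      using rate by (auto simp: p_def two_rates_def)
    have "- 1 \<le> r {j} i" using bounded[of "{j}"] i0j by (auto simp: abs_le_iff)
    then have "- (\<delta>^2) \<le> \<delta>^2 * r {j} i"
      using mult_left_mono[of "-1" "r {j} i" "\<delta>^2"] by simp
    moreover have "0 \<le> \<delta> * r {i0} i" using harmless[OF i] \<delta> by simp
    ultimately have "- (\<delta>^2) \<le> first_order_value" using L 3 by simp
    moreover have "0 < \<delta> + \<delta>^2" using \<delta> by (simp add: add_pos_nonneg)
    moreover have "\<delta>^2 / others_rate \<le> \<delta>^2 / \<delta>"
      using \<sigma> \<delta> by (intro divide_left_mono) (auto intro!: mult_pos_pos add_pos_nonneg)
    moreover have "\<delta>^2 / \<delta> = \<delta>" by (simp add: power2_eq_square)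
    ultimately show ?thesis
      using \<sigma> \<delta> \<delta>2 \<open>p i = 0\<close>
      by (intro small_rate_eps_best_reply quit_gain_le_of_value[where c = "\<delta>^2"]
          wait_gain_le_of_rate y) auto
  qed
qed

lemma normal_players_finite_subset: "normal_players I r \<subseteq> I" "finite (normal_players I r)"
  using normal_players_subset finite_players by (auto intro: finite_subset)

lemma stationary_eps_equilibrium_of_spread_lcp:
  defines "K \<equiv> normal_players I r"
  assumes lcp: "LCP_solution K (\<lambda>i k. r {i} k) (\<lambda>_. 0) w z0 z"
    and two: "a \<in> K" "b \<in> K" "a \<noteq> b" "0 < z a" "0 < z b" and "0 < \<epsilon>"
  shows "\<exists>x. stationary I x \<and> eps_equilibrium I r \<epsilon> x"
proof -
  have z: "\<And>k. k \<in> K \<Longrightarrow> 0 \<le> z k" "sum z K \<le> 1"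
    using lcp by (auto simp: LCP_solution_def)
  define \<delta> where "\<delta> = min (1/2) (\<epsilon>/5)"
  have \<delta>: "0 < \<delta>" "\<delta> \<le> 1/2" "5 * \<delta> \<le> \<epsilon>" using \<open>0 < \<epsilon>\<close> by (auto simp: \<delta>_def)
  have "stationary I (\<lambda>k t. proportional_rates K \<delta> z k)
      \<and> eps_equilibrium I r \<epsilon> (\<lambda>k t. proportional_rates K \<delta> z k)"
    using normal_players_finite_subset z \<delta>
    by (intro stationary_eps_equilibriumI proportional_rates_prob
        proportional_rates_eps_best_reply[OF _ z two
          lcp_quit_payoff_nonneg[OF lcp[unfolded K_def], folded K_def]
          lcp_quit_payoff_zero[OF lcp[unfolded K_def], folded K_def]])
       (auto simp: K_def)
  then show ?thesis by blast
qed

lemma stationary_eps_equilibrium_of_concentrated_lcp: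
  defines "K \<equiv> normal_players I r"
  assumes lcp: "LCP_solution K (\<lambda>i k. r {i} k) (\<lambda>_. 0) w z0 z"
    and a: "a \<in> K" "0 < z a" and others: "\<And>k. k \<in> K \<Longrightarrow> k \<noteq> a \<Longrightarrow> z k = 0" and "0 < \<epsilon>"
  shows "\<exists>x. stationary I x \<and> eps_equilibrium I r \<epsilon> x"
proof -
  have K: "K \<subseteq> I" "finite K" using normal_players_finite_subset by (auto simp: K_def)
  have harmless: "0 \<le> r {a} k" if "k \<in> I" for k
  proof -
    have "(\<Sum>l\<in>K. z l * r {l} k) = z a * r {a} k"
      using K a others by (simp add: sum.remove)
    then show ?thesis
      using lcp_quit_payoff_nonneg[OF lcp[unfolded K_def] that] a
      by (simp add: K_def zero_le_mult_iff)
  qed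
  obtain j where j: "j \<in> K" "a \<noteq> j" "r {j} a \<le> 0"
    using normal_player_has_nonpos_quitter[OF finite_players a(1)[unfolded K_def]]
    by (auto simp: K_def)
  define \<delta> where "\<delta> = min (1/4) (\<epsilon>/12)"
  have \<delta>: "0 < \<delta>" "\<delta> \<le> 1/4" "12 * \<delta> \<le> \<epsilon>" using \<open>0 < \<epsilon>\<close> by (auto simp: \<delta>_def)
  have "a \<in> I" "j \<in> I" using K a j by auto
  then have "stationary I (\<lambda>k t. two_rates a j \<delta> k)
      \<and> eps_equilibrium I r \<epsilon> (\<lambda>k t. two_rates a j \<delta> k)"
    using \<delta> by (intro stationary_eps_equilibriumI two_rates_prob
        two_rates_eps_best_reply[OF _ _ j(2) harmless j(3)]) auto
  then show ?thesis by blast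
qed

lemma stationary_eps_equilibrium_of_lcp:
  defines "K \<equiv> normal_players I r"
  assumes lcp: "LCP_solution K (\<lambda>i k. r {i} k) (\<lambda>_. 0) w z0 z" and "z0 < 1" and "0 < \<epsilon>"
  shows "\<exists>x. stationary I x \<and> eps_equilibrium I r \<epsilon> x"
proof -
  have z: "\<And>k. k \<in> K \<Longrightarrow> 0 \<le> z k" "0 < sum z K"
    using lcp \<open>z0 < 1\<close> by (auto simp: LCP_solution_def)
  then obtain a where a: "a \<in> K" "0 < z a"
    using sum_nonpos[of K z] by force
  show ?thesis
  proof (cases "\<exists>b\<in>K. b \<noteq> a \<and> 0 < z b")
    case True
    then show ?thesis
      using stationary_eps_equilibrium_of_spread_lcp[OF lcp[unfolded K_def]] a \<open>0 < \<epsilon>\<close>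
      unfolding K_def by blast
  next
    case False
    then have "\<And>k. k \<in> K \<Longrightarrow> k \<noteq> a \<Longrightarrow> z k = 0" using z(1) by force
    then show ?thesis
      using stationary_eps_equilibrium_of_concentrated_lcp[OF lcp[unfolded K_def]] a \<open>0 < \<epsilon>\<close>
      unfolding K_def by blast
  qed
qed

end

theorem lemma3:
  fixes N :: nat and r :: "nat set \<Rightarrow> nat \<Rightarrow> real"
  assumes bounded: "\<forall>S\<subseteq>{1..N}. \<forall>i\<in>{1..N}. \<bar>r S i\<bar> \<le> 1"
    and diag0: "\<forall>i\<in>{1..N}. r {i} i = 0"
    and nonempty: "normal_players {1..N} r \<noteq> {}"
    and lcp: "\<exists>w z0 z. LCP_solution (normal_players {1..N} r) (\<lambda>i k. r {i} k) (\<lambda>_. 0) w z0 z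
                \<and> z0 < 1"
  shows "\<forall>\<epsilon>>0. \<exists>x. stationary {1..N} x \<and> eps_equilibrium {1..N} r \<epsilon> x"
proof (intro allI impI)
  fix \<epsilon> :: real assume \<epsilon>: "0 < \<epsilon>"
  obtain w z0 z where sol: "LCP_solution (normal_players {1..N} r) (\<lambda>i k. r {i} k) (\<lambda>_. 0) w z0 z"
    and z0: "z0 < 1"
    using lcp by blast
  have game: "finite {1..N}" "\<And>S i. S \<subseteq> {1..N} \<Longrightarrow> i \<in> {1..N} \<Longrightarrow> \<bar>r S i\<bar> \<le> 1"
    "\<And>i. i \<in> {1..N} \<Longrightarrow> r {i} i = 0"
    using bounded diag0 by auto
  show "\<exists>x. stationary {1..N} x \<and> eps_equilibrium {1..N} r \<epsilon> x"
    by (rule stationary_eps_equilibrium_of_lcp[OF game sol z0 \<epsilon>])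
qed

end
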